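(* Let $X_1=\mathbb{R}^6_{\ge0}$ with coordinates $x,y,z,u,v,w$, and let $G\le\mathrm{Sym}(6)$ be the group generated by the coordinate permutations $(u\ z)(v\ y)$ and $(w\ x)$; set $\mathbb{M}_{212}=X_1/G$ with quotient map $q$. Let $\mathbb{M}^{\mathrm{pl}}_{212}=q(\{(x,y,z,u,v,w)\in X_1: w\le x\le 2w\})\subset\mathbb{M}_{212}$. Then the link of $\mathbb{M}^{\mathrm{pl}}_{212}$, namely $q(\{w\le x\le 2w\}\cap\{x+y+z+u+v+w=1\})$, is contractible.
   Context: This is the cell of the moduli space of genus 3 tropical curves for the trivalent graph of type (212) (two loops attached by bridges to a pair of vertices joined by two parallel edges), with edge lengths $x,y,z,u,v,w$; $\mathbb{M}^{\mathrm{pl}}_{212}$ is the locus of such metric graphs arising (in the closure of smooth curves) as tropical plane quartics. *)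

theory Defs
  imports "HOL-Analysis.Analysis" "HOL-Combinatorics.Transposition"
begin

definition quot_topology :: "'a topology \<Rightarrow> ('a \<Rightarrow> 'b) \<Rightarrow> 'b topology" where
  "quot_topology T q = topology (\<lambda>U. U \<subseteq> q ` topspace T \<and> openin T {x \<in> topspace T. q x \<in> U})"

lemma istopology_quot:
  "istopology (\<lambda>U. U \<subseteq> q ` topspace T \<and> openin T {x \<in> topspace T. q x \<in> U})"
proof -
  define f where "f U = {x \<in> topspace T. q x \<in> U}" for U
  have i: "f (S \<inter> S') = f S \<inter> f S'" for S S'
    by (auto simp: f_def)
  have u: "f (\<Union>K) = \<Union>(f ` K)" for K
    by (auto simp: f_def)
  have "istopology (\<lambda>U. U \<subseteq> q ` topspace T \<and> openin T (f U))"
    unfolding istopology_def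
  proof (rule conjI; intro allI impI)
    fix S S' assume "S \<subseteq> q ` topspace T \<and> openin T (f S)"
      "S' \<subseteq> q ` topspace T \<and> openin T (f S')"
    then show "S \<inter> S' \<subseteq> q ` topspace T \<and> openin T (f (S \<inter> S'))"
      unfolding i by (auto intro: openin_Int)
  next
    fix K assume "\<forall>S\<in>K. S \<subseteq> q ` topspace T \<and> openin T (f S)"
    then show "\<Union>K \<subseteq> q ` topspace T \<and> openin T (f (\<Union>K))"
      unfolding u by (auto intro!: openin_Union)
  qed
  then show ?thesis by (simp add: f_def)
qed

datatype coord = Cx | Cy | Cz | Cu | Cv | Cw

lemma UNIV_coord: "(UNIV :: coord set) = {Cx, Cy, Cz, Cu, Cv, Cw}"
  using coord.exhaust by auto

instance coord :: finite
  by standard (simp add: UNIV_coord)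

definition perm_act :: "(coord \<Rightarrow> coord) \<Rightarrow> real^coord \<Rightarrow> real^coord" where
  "perm_act s p = (\<chi> i. p $ (s i))"

definition gen1 :: "coord \<Rightarrow> coord" where
  "gen1 = Transposition.transpose Cu Cz \<circ> Transposition.transpose Cv Cy"

definition gen2 :: "coord \<Rightarrow> coord" where
  "gen2 = Transposition.transpose Cw Cx"

text \<open>The group G generated by (u z)(v y) and (w x) (finite, so closure under
  composition with the generators suffices).\<close>
inductive_set G212 :: "(coord \<Rightarrow> coord) set" where
  G_id: "id \<in> G212"
| G_gen1: "g \<in> G212 \<Longrightarrow> gen1 \<circ> g \<in> G212"
| G_gen2: "g \<in> G212 \<Longrightarrow> gen2 \<circ> g \<in> G212"

definition X1 :: "(real^coord) set" where
  "X1 = {p. \<forall>i. 0 \<le> p $ i}"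

definition q212 :: "real^coord \<Rightarrow> (real^coord) set" where
  "q212 p = {perm_act \<sigma> p | \<sigma>. \<sigma> \<in> G212}"

definition M212 :: "(real^coord) set topology" where
  "M212 = quot_topology (top_of_set X1) q212"

definition Mpl212 :: "(real^coord) set set" where
  "Mpl212 = q212 ` {p \<in> X1. p $ Cw \<le> p $ Cx \<and> p $ Cx \<le> 2 * p $ Cw}"

definition link_Mpl212 :: "(real^coord) set set" where
  "link_Mpl212 = q212 ` {p \<in> X1. p $ Cw \<le> p $ Cx \<and> p $ Cx \<le> 2 * p $ Cw \<and>
      p $ Cx + p $ Cy + p $ Cz + p $ Cu + p $ Cv + p $ Cw = 1}"

end

theory Submission
  imports Defs
begin

text \<open>The barycentre \<open>c = (1/6, \<dots>, 1/6)\<close> is fixed by every coordinate permutation and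
  lies in the convex cell \<open>{w \<le> x \<le> 2w, x + y + z + u + v + w = 1}\<close>. Hence the straight-line
  homotopy \<open>p \<mapsto> (1 - t) p + t c\<close> preserves the cell and commutes with \<open>G\<close>, so it acts on
  orbits and contracts the link. It is continuous on the quotient because the orbit map of a group
  action is open: its restriction to the saturated preimage of the link is still a quotient map,
  and so is its product with the locally compact interval \<open>[0, 1]\<close>.\<close>

lemma openin_quot_topology:
  "openin (quot_topology T q) U \<longleftrightarrow> U \<subseteq> q ` topspace T \<and> openin T {x \<in> topspace T. q x \<in> U}"
  unfolding quot_topology_def topology_inverse'[OF istopology_quot] ..

lemma topspace_quot_topology: "topspace (quot_topology T q) = q ` topspace T"
proof -
  have "{x \<in> topspace T. q x \<in> q ` topspace T} = topspace T"
    by blast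
  then have "openin (quot_topology T q) (q ` topspace T)"
    by (simp add: openin_quot_topology)
  then show ?thesis
    by (auto simp: topspace_def openin_quot_topology)
qed

lemma quotient_map_quot_topology: "quotient_map T (quot_topology T q) q"
  by (auto simp: quotient_map_def topspace_quot_topology openin_quot_topology)

lemma open_map_quot_topology:
  assumes "\<And>U. openin T U \<Longrightarrow> openin T {x \<in> topspace T. q x \<in> q ` U}"
  shows "open_map T (quot_topology T q) q"
  unfolding open_map_def openin_quot_topology
  using assms openin_subset by blast

lemma quotient_map_restriction_open_map:
  assumes quot: "quotient_map X Y f" and op: "open_map X Y f" and V: "V \<subseteq> topspace Y"
  shows "quotient_map (subtopology X {x \<in> topspace X. f x \<in> V}) (subtopology Y V) f"
proof (rule continuous_open_imp_quotient_map)
  show "continuous_map (subtopology X {x \<in> topspace X. f x \<in> V}) (subtopology Y V) f"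
    by (auto simp: continuous_map_in_subtopology quot quotient_imp_continuous_map
        continuous_map_from_subtopology)
  show "open_map (subtopology X {x \<in> topspace X. f x \<in> V}) (subtopology Y V) f"
    by (rule open_map_restriction[OF op refl])
  show "f ` topspace (subtopology X {x \<in> topspace X. f x \<in> V}) = topspace (subtopology Y V)"
    using V quotient_imp_surjective_map[OF quot] by auto
qed

lemma continuous_map_prod_quotient_map:
  assumes "locally_compact_space T" "Hausdorff_space T" "quotient_map X Y q"
    and "continuous_map (prod_topology T X) Z (\<lambda>(t, x). K (t, q x))"
  shows "continuous_map (prod_topology T Y) Z K"
proof (rule continuous_compose_quotient_map)
  show "quotient_map (prod_topology T X) (prod_topology T Y) (\<lambda>(t, x). (t, q x))"
    using assms by (simp add: quotient_map_prod_right)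
  show "continuous_map (prod_topology T X) Z (K \<circ> (\<lambda>(t, x). (t, q x)))"
    using assms(4) by (simp add: case_prod_beta' comp_def)
qed

lemma gen1_apply [simp]:
  "gen1 Cx = Cx" "gen1 Cy = Cv" "gen1 Cz = Cu" "gen1 Cu = Cz" "gen1 Cv = Cy" "gen1 Cw = Cw"
  by (simp_all add: gen1_def Transposition.transpose_def)

lemma gen2_apply [simp]:
  "gen2 Cx = Cw" "gen2 Cy = Cy" "gen2 Cz = Cz" "gen2 Cu = Cu" "gen2 Cv = Cv" "gen2 Cw = Cx"
  by (simp_all add: gen2_def Transposition.transpose_def)

lemma gen1_involution: "gen1 \<circ> gen1 = id"
proof
  fix c show "(gen1 \<circ> gen1) c = id c" by (cases c) simp_all
qed

lemma gen2_involution: "gen2 \<circ> gen2 = id"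
proof
  fix c show "(gen2 \<circ> gen2) c = id c" by (cases c) simp_all
qed

lemma G212_comp: "\<sigma> \<in> G212 \<Longrightarrow> \<tau> \<in> G212 \<Longrightarrow> \<sigma> \<circ> \<tau> \<in> G212"
  by (induction \<sigma> rule: G212.induct) (auto simp: comp_assoc intro: G212.intros)

lemma gen1_in_G212: "gen1 \<in> G212"
  using G212.G_gen1[OF G212.G_id] by simp

lemma gen2_in_G212: "gen2 \<in> G212"
  using G212.G_gen2[OF G212.G_id] by simp

lemma G212_right_inverse: "\<sigma> \<in> G212 \<Longrightarrow> \<exists>\<tau>\<in>G212. \<sigma> \<circ> \<tau> = id"
proof (induction \<sigma> rule: G212.induct)
  have step: "\<exists>\<tau>'\<in>G212. (s \<circ> g) \<circ> \<tau>' = id"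
    if s: "s \<in> G212" "s \<circ> s = id" and IH: "\<exists>\<tau>\<in>G212. g \<circ> \<tau> = id" for s g
  proof -
    obtain \<tau> where "\<tau> \<in> G212" "g \<circ> \<tau> = id" using IH ..
    then have "\<tau> \<circ> s \<in> G212" "(s \<circ> g) \<circ> (\<tau> \<circ> s) = id"
      using s by (simp add: G212_comp, metis comp_assoc id_comp)
    then show ?thesis by blast
  qed
  {
    case G_id
    show ?case using G212.G_id by (intro bexI[of _ id]) simp_all
  next
    case (G_gen1 g)
    show ?case by (rule step[OF gen1_in_G212 gen1_involution G_gen1.IH])
  next
    case (G_gen2 g)
    show ?case by (rule step[OF gen2_in_G212 gen2_involution G_gen2.IH])
  }
qed

lemma perm_act_perm_act: "perm_act \<sigma> (perm_act \<tau> p) = perm_act (\<tau> \<circ> \<sigma>) p"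
  by (simp add: perm_act_def vec_eq_iff)

lemma perm_act_id [simp]: "perm_act id p = p"
  by (simp add: perm_act_def vec_eq_iff)

lemma continuous_perm_act: "continuous_on UNIV (perm_act \<sigma>)"
  unfolding perm_act_def by (intro continuous_intros)

lemma perm_act_in_X1: "p \<in> X1 \<Longrightarrow> perm_act \<sigma> p \<in> X1"
  by (simp add: X1_def perm_act_def)

lemma q212_perm_act: assumes "\<sigma> \<in> G212" shows "q212 (perm_act \<sigma> p) = q212 p"
proof
  show "q212 (perm_act \<sigma> p) \<subseteq> q212 p"
    using G212_comp[OF assms] by (auto simp: q212_def perm_act_perm_act)
  show "q212 p \<subseteq> q212 (perm_act \<sigma> p)"
  proof
    fix x assume "x \<in> q212 p"
    then obtain \<rho> where \<rho>: "\<rho> \<in> G212" "x = perm_act \<rho> p" by (auto simp: q212_def)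
    obtain \<tau> where \<tau>: "\<tau> \<in> G212" "\<sigma> \<circ> \<tau> = id" using G212_right_inverse[OF assms] ..
    have "x = perm_act (\<tau> \<circ> \<rho>) (perm_act \<sigma> p)"
      using \<rho>(2) \<tau>(2) by (simp add: perm_act_perm_act flip: comp_assoc)
    then show "x \<in> q212 (perm_act \<sigma> p)"
      using G212_comp[OF \<tau>(1) \<rho>(1)] by (auto simp: q212_def)
  qed
qed

lemma q212_eq_imp_perm_act: "q212 p = q212 p' \<Longrightarrow> \<exists>\<sigma>\<in>G212. p = perm_act \<sigma> p'"
  using G212.G_id by (auto simp: q212_def set_eq_iff)

lemma open_map_q212: "open_map (top_of_set X1) M212 q212"
  unfolding M212_def
proof (rule open_map_quot_topology)
  fix U assume "openin (top_of_set X1) U"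
  then obtain P where P: "open P" "U = X1 \<inter> P" by (auto simp: openin_open)
  have "{x \<in> X1. q212 x \<in> q212 ` U} = X1 \<inter> (\<Union>\<sigma>\<in>G212. perm_act \<sigma> -` P)"
  proof (intro equalityI subsetI)
    fix x assume "x \<in> {x \<in> X1. q212 x \<in> q212 ` U}"
    then obtain y where "x \<in> X1" "y \<in> P" "q212 y = q212 x" using P(2) by auto
    then show "x \<in> X1 \<inter> (\<Union>\<sigma>\<in>G212. perm_act \<sigma> -` P)"
      using q212_eq_imp_perm_act by blast
  next
    fix x assume "x \<in> X1 \<inter> (\<Union>\<sigma>\<in>G212. perm_act \<sigma> -` P)"
    then obtain \<sigma> where "x \<in> X1" "\<sigma> \<in> G212" "perm_act \<sigma> x \<in> P" by auto
    then show "x \<in> {x \<in> X1. q212 x \<in> q212 ` U}"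
      using P(2) q212_perm_act perm_act_in_X1 by (metis (mono_tags) IntI image_eqI mem_Collect_eq)
  qed
  moreover have "open (\<Union>\<sigma>\<in>G212. perm_act \<sigma> -` P)"
    using open_vimage[OF P(1) continuous_perm_act] by blast
  ultimately show "openin (top_of_set X1) {x \<in> topspace (top_of_set X1). q212 x \<in> q212 ` U}"
    by (auto simp: openin_open_Int Int_commute)
qed

lemma topspace_M212: "topspace M212 = q212 ` X1"
  by (simp add: M212_def topspace_quot_topology)

definition barycentre :: "real^coord" where
  "barycentre = (\<chi> i. 1 / 6)"

definition contract :: "real \<Rightarrow> real^coord \<Rightarrow> real^coord" where
  "contract t p = (1 - t) *\<^sub>R p + t *\<^sub>R barycentre"

definition link_cell :: "(real^coord) set" where
  "link_cell = {p \<in> X1. p $ Cw \<le> p $ Cx \<and> p $ Cx \<le> 2 * p $ Cw \<and>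
      p $ Cx + p $ Cy + p $ Cz + p $ Cu + p $ Cv + p $ Cw = 1}"

lemma link_Mpl212_eq: "link_Mpl212 = q212 ` link_cell"
  unfolding link_Mpl212_def link_cell_def ..

lemma contract_0 [simp]: "contract 0 = id"
  and contract_1 [simp]: "contract 1 p = barycentre"
  by (simp_all add: contract_def fun_eq_iff)

lemma barycentre_in_link_cell: "barycentre \<in> link_cell"
  by (simp add: link_cell_def X1_def barycentre_def)

lemma convex_link_cell: "convex link_cell"
proof (rule convexI)
  fix p p' :: "real^coord" and a b :: real
  assume p: "p \<in> link_cell" and p': "p' \<in> link_cell" and ab: "0 \<le> a" "0 \<le> b" "a + b = 1"
  let ?r = "a *\<^sub>R p + b *\<^sub>R p'"
  have "?r $ i \<ge> 0" for i
    using p p' ab by (simp add: link_cell_def X1_def)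
  moreover have "?r $ Cw \<le> ?r $ Cx" "?r $ Cx \<le> 2 * ?r $ Cw"
    using p p' ab by (auto simp: link_cell_def algebra_simps intro!: add_mono mult_left_mono)
  moreover have "?r $ Cx + ?r $ Cy + ?r $ Cz + ?r $ Cu + ?r $ Cv + ?r $ Cw
      = a * (p $ Cx + p $ Cy + p $ Cz + p $ Cu + p $ Cv + p $ Cw)
        + b * (p' $ Cx + p' $ Cy + p' $ Cz + p' $ Cu + p' $ Cv + p' $ Cw)"
    by (simp add: algebra_simps)
  ultimately show "?r \<in> link_cell"
    using p p' ab by (simp add: link_cell_def X1_def)
qed

lemma contract_in_link_cell: "t \<in> {0..1} \<Longrightarrow> p \<in> link_cell \<Longrightarrow> contract t p \<in> link_cell"
  unfolding contract_def
  by (rule convexD[OF convex_link_cell _ barycentre_in_link_cell]) auto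

lemma perm_act_contract: "perm_act \<sigma> (contract t p) = contract t (perm_act \<sigma> p)"
  by (simp add: perm_act_def contract_def barycentre_def vec_eq_iff)

lemma contract_image_q212: "contract t ` q212 p = q212 (contract t p)"
  by (auto simp: q212_def perm_act_contract)

definition link_preimage :: "(real^coord) set" where
  "link_preimage = {p \<in> X1. q212 p \<in> link_Mpl212}"

lemma contract_in_link_preimage:
  assumes t: "t \<in> {0..1}" and p: "p \<in> link_preimage"
  shows "contract t p \<in> link_preimage"
proof -
  obtain p' where p': "p' \<in> link_cell" "q212 p = q212 p'"
    using p by (auto simp: link_preimage_def link_Mpl212_eq)
  then obtain \<sigma> where \<sigma>: "\<sigma> \<in> G212" "p = perm_act \<sigma> p'"
    using q212_eq_imp_perm_act by blast
  have "contract t p' \<in> link_cell"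
    using t p'(1) by (rule contract_in_link_cell)
  moreover have "contract t p = perm_act \<sigma> (contract t p')"
    using \<sigma>(2) by (simp add: perm_act_contract)
  ultimately show ?thesis
    using \<sigma>(1) by (auto simp: link_preimage_def link_Mpl212_eq link_cell_def
        q212_perm_act perm_act_in_X1)
qed

lemma quotient_map_q212_link:
  "quotient_map (top_of_set link_preimage) (subtopology M212 link_Mpl212) q212"
proof -
  have "link_Mpl212 \<subseteq> topspace M212"
    by (auto simp: topspace_M212 link_Mpl212_def)
  then have "quotient_map (subtopology (top_of_set X1) {p \<in> X1. q212 p \<in> link_Mpl212})
      (subtopology M212 link_Mpl212) q212"
    using quotient_map_restriction_open_map[OF _ open_map_q212]
      quotient_map_quot_topology[of "top_of_set X1" q212]
    by (simp add: M212_def)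
  then show ?thesis
    by (simp add: subtopology_subtopology link_preimage_def Collect_conj_eq)
qed

lemma continuous_map_contract:
  "continuous_map (prod_topology (top_of_set {0..1}) (top_of_set link_preimage))
     (top_of_set link_preimage) (\<lambda>(t, p). contract t p)"
proof -
  have "continuous_on ({0..1} \<times> link_preimage) (\<lambda>(t, p). contract t p)"
    unfolding contract_def case_prod_beta' by (intro continuous_intros)
  then show ?thesis
    using contract_in_link_preimage by auto
qed

lemma continuous_map_contract_orbits:
  "continuous_map (prod_topology (top_of_set {0..1}) (subtopology M212 link_Mpl212))
     (subtopology M212 link_Mpl212) (\<lambda>(t, A). contract t ` A)"
proof (rule continuous_map_prod_quotient_map[OF _ _ quotient_map_q212_link])
  show "locally_compact_space (top_of_set {0..1::real})"
    by (simp add: compact_imp_locally_compact_space compact_space_subtopology)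
  show "Hausdorff_space (top_of_set {0..1::real})"
    by (simp add: Hausdorff_space_subtopology)
  have "(\<lambda>(t, p). contract t ` q212 p) = q212 \<circ> (\<lambda>(t, p). contract t p)"
    by (auto simp: contract_image_q212)
  then show "continuous_map (prod_topology (top_of_set {0..1}) (top_of_set link_preimage))
      (subtopology M212 link_Mpl212) (\<lambda>(t, p). (\<lambda>(t, A). contract t ` A) (t, q212 p))"
    using continuous_map_compose[OF continuous_map_contract
        quotient_imp_continuous_map[OF quotient_map_q212_link]] by simp
qed

theorem mainTheorem6:
  shows "contractible_space (subtopology M212 link_Mpl212)"
proof -
  let ?L = "subtopology M212 link_Mpl212"
  have "homotopic_with (\<lambda>x. True) ?L ?L id (\<lambda>A. q212 barycentre)"
    unfolding homotopic_with[OF refl]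
  proof (intro exI conjI ballI)
    show "continuous_map (prod_topology (top_of_set {0..1}) ?L) ?L (\<lambda>(t, A). contract t ` A)"
      by (rule continuous_map_contract_orbits)
    fix A assume "A \<in> topspace ?L"
    then obtain p where "A = q212 p"
      by (auto simp: link_Mpl212_def)
    then show "(\<lambda>(t, A). contract t ` A) (1, A) = q212 barycentre"
      by (simp only: case_prod_conv contract_image_q212 contract_1)
  qed simp_all
  then show ?thesis
    unfolding contractible_space_def by blast
qed

end
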